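(* There exists a constant $r_b>0$, depending on $r$, and a constant $C>0$ such that for all $\varepsilon>0$: (1) if $\xi\in\mathbb{H}^N$ and $\eta\in\mathbb{H}^N\setminus B_r(0)$ satisfy $|\eta^{-1}\circ\xi|\le r_b$, then $|u_\varepsilon(\xi)-u_\varepsilon(\eta)|\le C\varepsilon^{\frac{Q-2s}{2}}|\eta^{-1}\circ\xi|$; (2) if $\xi,\eta\in\mathbb{H}^N\setminus B_r(0)$, then $|u_\varepsilon(\xi)-u_\varepsilon(\eta)|\le C\varepsilon^{\frac{Q-2s}{2}}\min\{1,|\eta^{-1}\circ\xi|\}$.
   Context: $\mathbb{H}^N=\mathbb{R}^{2N+1}$ with group law $\xi\circ\xi'=(x+x',y+y',t+t'+2(x'\cdot y-y'\cdot x))$, $Q=2N+2$, dilations $\delta_a(x,y,t)=(ax,ay,a^2t)$, homogeneous norm $|\xi|=((|x|^2+|y|^2)^2+t^2)^{1/4}$, balls $B_r(0)=\{|\xi|<r\}$, $s\in(0,1)$, $Q^*_s=\frac{2Q}{Q-2s}$. $S_s>0$ is the sharp fractional Sobolev constant on $\mathbb{H}^N$. $U(x,y,t)=C_0(t^2+(1+|x|^2+|y|^2)^2)^{-\frac{Q-2s}{4}}$ ($C_0>0$), $\overline{u}=U/\|U\|_{L^{Q^*_s}(\mathbb{H}^N)}$, $u^*(\xi)=\overline{u}(\delta_{S_s^{-1/(2s)}}(\xi))$, $U_\varepsilon(\xi)=\varepsilon^{-\frac{Q-2s}{2}}u^*(\delta_{1/\varepsilon}(\xi))$. $\Omega\subseteq\mathbb{H}^N$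 is bounded open, $r>0$ with $B_{4r}(0)\subset\Omega$, $\phi\in C^\infty(\mathbb{H}^N)$, $0\le\phi\le1$, $\phi=1$ on $B_r(0)$, $\phi=0$ outside $B_{2r}(0)$, and $u_\varepsilon=U_\varepsilon\phi$. *)

theory Defs
  imports "HOL-Analysis.Analysis"
begin

type_synonym 'n heis = "(real^'n) \<times> (real^'n) \<times> real"

definition heis_mult :: "'n::finite heis \<Rightarrow> 'n heis \<Rightarrow> 'n heis" where
  "heis_mult p q = (case p of (x, y, t) \<Rightarrow> case q of (x', y', t') \<Rightarrow>
     (x + x', y + y', t + t' + 2 * (x' \<bullet> y - y' \<bullet> x)))"

definition heis_inv :: "'n::finite heis \<Rightarrow> 'n heis" where
  "heis_inv p = (case p of (x, y, t) \<Rightarrow> (-x, -y, -t))"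

definition heis_norm :: "'n::finite heis \<Rightarrow> real" where
  "heis_norm p = (case p of (x, y, t) \<Rightarrow>
     ((norm x ^ 2 + norm y ^ 2) ^ 2 + t ^ 2) powr (1/4))"

definition heis_dil :: "real \<Rightarrow> 'n::finite heis \<Rightarrow> 'n heis" where
  "heis_dil a p = (case p of (x, y, t) \<Rightarrow> (a *\<^sub>R x, a *\<^sub>R y, a ^ 2 * t))"

definition heis_ball :: "real \<Rightarrow> 'n::finite heis set" where
  "heis_ball \<rho> = {p. heis_norm p < \<rho>}"

text \<open>Homogeneous dimension Q = 2N+2, determined by the point type.\<close>
definition heis_Q :: "'n::finite heis \<Rightarrow> real" where
  "heis_Q p = real (2 * CARD('n) + 2)"

definition crit_exp :: "'n::finite heis \<Rightarrow> real \<Rightarrow> real" where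
  "crit_exp p s = 2 * heis_Q p / (heis_Q p - 2 * s)"

definition bubble_U :: "real \<Rightarrow> real \<Rightarrow> 'n::finite heis \<Rightarrow> real" where
  "bubble_U C0 s p = (case p of (x, y, t) \<Rightarrow>
     C0 * (t ^ 2 + (1 + norm x ^ 2 + norm y ^ 2) ^ 2) powr (- (heis_Q p - 2 * s) / 4))"

definition Lp_norm :: "real \<Rightarrow> ('a::euclidean_space \<Rightarrow> real) \<Rightarrow> real" where
  "Lp_norm q f = (\<integral>z. \<bar>f z\<bar> powr q \<partial>lborel) powr (1 / q)"

definition bubble_ubar :: "real \<Rightarrow> real \<Rightarrow> 'n::finite heis \<Rightarrow> real" where
  "bubble_ubar C0 s p = bubble_U C0 s p /
      Lp_norm (crit_exp p s) (bubble_U C0 s :: 'n heis \<Rightarrow> real)"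

definition bubble_ustar :: "real \<Rightarrow> real \<Rightarrow> real \<Rightarrow> 'n::finite heis \<Rightarrow> real" where
  "bubble_ustar S C0 s p = bubble_ubar C0 s (heis_dil (S powr (- 1 / (2 * s))) p)"

definition bubble_Ueps :: "real \<Rightarrow> real \<Rightarrow> real \<Rightarrow> real \<Rightarrow> 'n::finite heis \<Rightarrow> real" where
  "bubble_Ueps S C0 s \<epsilon> p =
     \<epsilon> powr (- (heis_Q p - 2 * s) / 2) * bubble_ustar S C0 s (heis_dil (1 / \<epsilon>) p)"

fun Ck :: "nat \<Rightarrow> ('a::euclidean_space \<Rightarrow> real) \<Rightarrow> bool" where
  "Ck 0 f = continuous_on UNIV f"
| "Ck (Suc k) f = ((\<forall>x. f differentiable (at x)) \<and>
      (\<forall>v\<in>Basis. Ck k (\<lambda>x. frechet_derivative f (at x) v)))"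

definition smooth_fun :: "('a::euclidean_space \<Rightarrow> real) \<Rightarrow> bool" where
  "smooth_fun f \<longleftrightarrow> (\<forall>k. Ck k f)"

end

(*
  Write a = (Q - 2s)/2 and k = S^(-1/(2s)). For eps > 0 the function u_eps is, up to the
  constant factor K eps^a, the product of the cut-off phi with V_eps^(-a), where V_eps(x,y,t) is
  the Euclidean length of the plane vector (k^2 t, eps^2 + k^2 (|x|^2 + |y|^2)).
  Three facts make every estimate uniform in eps: V_eps(xi) >= k^2 |xi|^2 for the Koranyi norm,
  so V_eps >= k^2 r^2 outside B_r; eps only translates one coordinate of that plane vector, so
  V_eps is Lipschitz on Euclidean balls with an eps-independent constant; and the Koranyi
  distance |eta^-1 xi| controls the Euclidean distance |xi - eta| on bounded sets.
  Near the support of the C^1 cut-off, V_eps^(-a) phi is therefore Lipschitz with a constant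
  independent of eps, which gives (1); outside B_r it is uniformly bounded, which turns (1)
  into (2).
*)

theory Submission
  imports Defs
begin

section \<open>Lipschitz estimates\<close>

lemma Ck_1_lipschitz_on:
  fixes \<phi> :: "'a::euclidean_space \<Rightarrow> real"
  assumes "Ck 1 \<phi>" "compact X" "convex X"
  obtains L where "L-lipschitz_on X \<phi>"
proof -
  define D where "D x = frechet_derivative \<phi> (at x)" for x
  have deriv: "(\<phi> has_derivative D x) (at x)" for x
    using assms(1) by (simp add: D_def frechet_derivative_works)
  have "continuous_on X (\<lambda>x. \<Sum>b\<in>Basis. norm (D x b))"
    using assms(1) unfolding D_def
    by (intro continuous_intros) (auto intro: continuous_on_subset)
  then have "bounded ((\<lambda>x. \<Sum>b\<in>Basis. norm (D x b)) ` X)"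
    using assms(2) by (intro compact_imp_bounded compact_continuous_image)
  then obtain M where "M > 0" and M: "\<And>x. x \<in> X \<Longrightarrow> (\<Sum>b\<in>Basis. norm (D x b)) \<le> M"
    unfolding bounded_pos by (metis image_eqI real_norm_def abs_le_D1)
  have "onorm (D x) \<le> M" if "x \<in> X" for x
    using onorm_componentwise[OF has_derivative_bounded_linear[OF deriv]] M[OF that]
    by (rule order_trans)
  then have "M-lipschitz_on X \<phi>"
    using \<open>M > 0\<close> assms(3)
    by (intro bounded_derivative_imp_lipschitz[where f'=D]) (auto intro: has_derivative_at_withinI deriv)
  then show thesis ..
qed

lemma lipschitz_on_powr_neg:
  fixes v0 a :: real
  assumes "0 < v0" "0 \<le> a"
  shows "(a * v0 powr (- a - 1))-lipschitz_on {v0..} (\<lambda>v. v powr - a)"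
proof (rule bounded_derivative_imp_lipschitz)
  fix v :: real assume v: "v \<in> {v0..}"
  then have "0 < v"
    using assms(1) by simp
  then show "((\<lambda>v. v powr - a) has_derivative (*) (- a * v powr (- a - 1))) (at v within {v0..})"
    by (rule has_field_derivative_imp_has_derivative[OF
        has_field_derivative_at_within[OF has_real_derivative_powr]])
  have "\<bar>- a * v powr (- a - 1)\<bar> \<le> a * v0 powr (- a - 1)"
    using assms v by (simp add: abs_mult) (intro mult_left_mono powr_mono2', auto)
  then show "onorm ((*) (- a * v powr (- a - 1))) \<le> a * v0 powr (- a - 1)"
    by (intro onorm_le) (simp add: abs_mult mult_right_mono)
next
  show "convex {v0..}"
    by (rule convex_real_interval)
  show "0 \<le> a * v0 powr (- a - 1)"
    using assms(2) by simp
qed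

lemma lipschitz_on_mult_bounded:
  fixes f g :: "'a::metric_space \<Rightarrow> real"
  assumes f: "Lf-lipschitz_on X f" "\<And>x. x \<in> X \<Longrightarrow> \<bar>f x\<bar> \<le> F"
    and g: "Lg-lipschitz_on X g" "\<And>x. x \<in> X \<Longrightarrow> \<bar>g x\<bar> \<le> G"
    and "0 \<le> F" "0 \<le> G"
  shows "(F * Lg + G * Lf)-lipschitz_on X (\<lambda>x. f x * g x)"
proof (rule lipschitz_onI)
  fix x y assume xy: "x \<in> X" "y \<in> X"
  have "f x * g x - f y * g y = f x * (g x - g y) + g y * (f x - f y)"
    by (simp add: algebra_simps)
  then have "\<bar>f x * g x - f y * g y\<bar> \<le> \<bar>f x\<bar> * \<bar>g x - g y\<bar> + \<bar>g y\<bar> * \<bar>f x - f y\<bar>"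
    by (metis abs_mult abs_triangle_ineq)
  also have "\<dots> \<le> F * (Lg * dist x y) + G * (Lf * dist x y)"
    using lipschitz_onD[OF f(1) xy] lipschitz_onD[OF g(1) xy] f(2) g(2) xy \<open>0 \<le> F\<close> \<open>0 \<le> G\<close>
    by (intro add_mono mult_mono) (auto simp: dist_real_def)
  finally show "dist (f x * g x) (f y * g y) \<le> (F * Lg + G * Lf) * dist x y"
    by (simp add: dist_real_def algebra_simps)
next
  show "0 \<le> F * Lg + G * Lf"
    using assms lipschitz_on_nonneg by (metis add_nonneg_nonneg mult_nonneg_nonneg)
qed

lemma abs_norm_sq_diff_le:
  fixes u v :: "'a::real_normed_vector"
  assumes "norm u \<le> R" "norm v \<le> R"
  shows "\<bar>norm u ^ 2 - norm v ^ 2\<bar> \<le> 2 * R * norm (u - v)"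
proof -
  have "norm u ^ 2 - norm v ^ 2 = (norm u + norm v) * (norm u - norm v)"
    by (simp add: power2_eq_square algebra_simps)
  then have "\<bar>norm u ^ 2 - norm v ^ 2\<bar> = (norm u + norm v) * \<bar>norm u - norm v\<bar>"
    by (simp add: abs_mult)
  also have "\<dots> \<le> (2 * R) * norm (u - v)"
    using assms order_trans[OF norm_ge_zero assms(1)] by (intro mult_mono norm_triangle_ineq3) auto
  finally show ?thesis .
qed

lemma abs_diff_le_min_one:
  fixes u v d :: real
  assumes "0 < \<rho>" "\<rho> \<le> 1" "0 \<le> M" "0 \<le> d"
    and "d \<le> \<rho> \<Longrightarrow> \<bar>u - v\<bar> \<le> M * d" and "\<bar>u\<bar> \<le> G" "\<bar>v\<bar> \<le> G"
  shows "\<bar>u - v\<bar> \<le> max M (2 * G / \<rho>) * min 1 d"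
proof (cases "d \<le> \<rho>")
  case True
  have "\<bar>u - v\<bar> \<le> M * d"
    using True by (rule assms(5))
  also have "\<dots> \<le> max M (2 * G / \<rho>) * d"
    using assms(4) by (rule mult_right_mono[OF max.cobounded1])
  also have "\<dots> = max M (2 * G / \<rho>) * min 1 d"
    using True assms(2) by simp
  finally show ?thesis .
next
  case False
  have "\<bar>u - v\<bar> \<le> 2 * G / \<rho> * \<rho>"
    using assms(1,6,7) by simp
  also have "\<dots> \<le> max M (2 * G / \<rho>) * min 1 d"
    using False assms(1-3) by (intro mult_mono) auto
  finally show ?thesis .
qed

lemma abs_scaled_diff_le:
  fixes K c u v X e :: real
  assumes "\<bar>u - v\<bar> \<le> X * e" "0 \<le> c" "0 \<le> e"
  shows "\<bar>K * c * u - K * c * v\<bar> \<le> (\<bar>K\<bar> * X + 1) * c * e"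
proof -
  have "\<bar>K * c * u - K * c * v\<bar> = \<bar>K\<bar> * c * \<bar>u - v\<bar>"
    using assms(2) by (simp add: abs_mult flip: right_diff_distrib)
  also have "\<dots> \<le> \<bar>K\<bar> * c * (X * e)"
    using assms(1,2) by (intro mult_left_mono) auto
  also have "\<dots> \<le> (\<bar>K\<bar> * X + 1) * c * e"
    using assms(2,3) by (simp add: algebra_simps)
  finally show ?thesis .
qed

section \<open>Euclidean and Koranyi norms on the Heisenberg group\<close>

lemma norm_heis_sq: "norm ((x, y, t) :: 'n::finite heis) ^ 2 = norm x ^ 2 + norm y ^ 2 + t ^ 2"
  by (simp add: norm_Pair)

lemma norm_heis_components:
  fixes x y :: "real^'n::finite"
  shows "norm x \<le> norm (x, y, t)" "norm y \<le> norm (x, y, t)" "\<bar>t\<bar> \<le> norm (x, y, t)"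
  by (simp_all add: norm_Pair real_le_rsqrt)

lemma norm_heis_le: "norm ((x, y, t) :: 'n::finite heis) \<le> norm x + norm y + \<bar>t\<bar>"
  using norm_Pair_le[of x "(y, t)"] norm_Pair_le[of y t] by simp

lemma heis_norm_nonneg: "0 \<le> heis_norm p"
  by (cases p) (simp add: heis_norm_def)

lemma heis_norm_pow4: "heis_norm (x, y, t) ^ 4 = (norm x ^ 2 + norm y ^ 2) ^ 2 + t ^ 2"
proof -
  have "(X powr (1/4)) ^ 4 = X" if "0 \<le> X" for X :: real
    using that by (cases "X = 0") (simp_all add: powr_power)
  then show ?thesis by (simp add: heis_norm_def)
qed

lemma heis_norm_components:
  fixes x y :: "real^'n::finite"
  shows "norm x ^ 2 + norm y ^ 2 \<le> heis_norm (x, y, t) ^ 2"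
    and "norm x \<le> heis_norm (x, y, t)" "norm y \<le> heis_norm (x, y, t)"
    and "\<bar>t\<bar> \<le> heis_norm (x, y, t) ^ 2"
proof -
  let ?N = "heis_norm (x, y, t)"
  have N4: "(?N ^ 2) ^ 2 = (norm x ^ 2 + norm y ^ 2) ^ 2 + t ^ 2"
    using heis_norm_pow4[of x y t] by (simp only: power_mult[symmetric] numeral_times_numeral) simp
  show z: "norm x ^ 2 + norm y ^ 2 \<le> ?N ^ 2"
    by (rule power2_le_imp_le) (use N4 in simp_all)
  show "norm x \<le> ?N" "norm y \<le> ?N"
    by (rule power2_le_imp_le[OF order_trans[OF _ z] heis_norm_nonneg]; simp)+
  show "\<bar>t\<bar> \<le> ?N ^ 2"
    by (rule power2_le_imp_le) (use N4 in simp_all)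
qed

lemma norm_le_of_heis_norm_le:
  assumes "heis_norm (p :: 'n::finite heis) \<le> \<rho>"
  shows "norm p \<le> \<rho> + \<rho>\<^sup>2"
proof (cases p)
  case (fields x y t)
  let ?N = "heis_norm p"
  have N0: "0 \<le> ?N"
    by (rule heis_norm_nonneg)
  have "t ^ 2 \<le> (?N ^ 2) ^ 2"
    using power_mono[OF heis_norm_components(4)[where x=x and y=y and t=t] abs_ge_zero, of 2]
    by (simp add: fields)
  then have "norm p ^ 2 \<le> ?N ^ 2 + (?N ^ 2) ^ 2"
    using heis_norm_components(1)[where x=x and y=y and t=t] norm_heis_sq[of x y t]
    unfolding fields by linarith
  also have "\<dots> \<le> (?N + ?N ^ 2) ^ 2"
    unfolding power2_sum using N0 by simp
  finally have "norm p \<le> ?N + ?N ^ 2"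
    by (rule power2_le_imp_le) (use N0 in simp)
  also have "\<dots> \<le> \<rho> + \<rho>\<^sup>2"
    using assms N0 by (intro add_mono power_mono) auto
  finally show ?thesis .
qed

lemma heis_inv_mult_inv: "heis_inv (heis_mult (heis_inv \<eta>) \<xi>) = heis_mult (heis_inv \<xi>) \<eta>"
  by (cases \<xi>; cases \<eta>) (simp add: heis_mult_def heis_inv_def inner_commute)

lemma heis_norm_inv: "heis_norm (heis_inv p) = heis_norm p"
  by (cases p) (simp add: heis_norm_def heis_inv_def)

lemma heis_dist_commute:
  "heis_norm (heis_mult (heis_inv \<xi>) \<eta>) = heis_norm (heis_mult (heis_inv \<eta>) \<xi>)"
  by (metis heis_inv_mult_inv heis_norm_inv)

lemma norm_diff_le_heis_dist:
  fixes \<xi> \<eta> :: "'n::finite heis"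
  defines "d \<equiv> heis_norm (heis_mult (heis_inv \<eta>) \<xi>)"
  shows "norm (\<xi> - \<eta>) \<le> d * (2 + d + 4 * norm \<eta>)"
proof -
  obtain x1 y1 t1 x2 y2 t2 where \<xi>: "\<xi> = (x1, y1, t1)" and \<eta>: "\<eta> = (x2, y2, t2)"
    by (cases \<xi>; cases \<eta>)
  define w where "w = t1 - t2 + 2 * (y1 \<bullet> x2 - x1 \<bullet> y2)"
  have d: "d = heis_norm (x1 - x2, y1 - y2, w)"
    by (simp add: d_def \<xi> \<eta> heis_mult_def heis_inv_def w_def algebra_simps)
  have d0: "0 \<le> d"
    by (simp add: d_def heis_norm_nonneg)
  note N = heis_norm_components[where x="x1 - x2" and y="y1 - y2" and t=w, folded d]
  have cs: "\<bar>u \<bullet> v\<bar> \<le> d * norm \<eta>" if "norm u \<le> d" "norm v \<le> norm \<eta>" for u v :: "real^'n"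
    using Cauchy_Schwarz_ineq2[of u v] mult_mono[OF that d0 norm_ge_zero] by linarith
  have comps: "norm x2 \<le> norm \<eta>" "norm y2 \<le> norm \<eta>"
    unfolding \<eta> by (rule norm_heis_components)+
  have "t1 - t2 = w + 2 * ((x1 - x2) \<bullet> y2) - 2 * ((y1 - y2) \<bullet> x2)"
    by (simp add: w_def inner_diff_left inner_commute algebra_simps)
  then have "\<bar>t1 - t2\<bar> \<le> d ^ 2 + 2 * (d * norm \<eta>) + 2 * (d * norm \<eta>)"
    using N(4) cs[OF N(2) comps(2)] cs[OF N(3) comps(1)] by linarith
  moreover have "norm (\<xi> - \<eta>) \<le> norm (x1 - x2) + norm (y1 - y2) + \<bar>t1 - t2\<bar>"
    using norm_heis_le[of "x1 - x2" "y1 - y2" "t1 - t2"] by (simp add: \<xi> \<eta>)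
  ultimately show ?thesis
    using N(2,3) by (simp add: power2_eq_square algebra_simps)
qed

lemma norm_diff_le_heis_dist_near:
  fixes \<xi> \<eta> :: "'n::finite heis"
  defines "d \<equiv> heis_norm (heis_mult (heis_inv \<eta>) \<xi>)"
  assumes "d \<le> 1" "min (norm \<xi>) (norm \<eta>) \<le> R"
  shows "norm (\<xi> - \<eta>) \<le> (3 + 4 * R) * d"
proof -
  have "0 \<le> d"
    by (simp add: d_def heis_norm_nonneg)
  have bound: "d * (2 + d + 4 * norm \<zeta>) \<le> (3 + 4 * R) * d" if "norm \<zeta> \<le> R" for \<zeta> :: "'n heis"
    using mult_left_mono[of "2 + d + 4 * norm \<zeta>" "3 + 4 * R" d] that assms(2) \<open>0 \<le> d\<close>
    by (simp add: mult.commute)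
  show ?thesis
  proof (cases "norm \<eta> \<le> R")
    case True
    show ?thesis
      using norm_diff_le_heis_dist[of \<xi> \<eta>] bound[OF True] unfolding d_def by linarith
  next
    case False
    then have "norm \<xi> \<le> R"
      using assms(3) by simp
    moreover have "norm (\<xi> - \<eta>) \<le> d * (2 + d + 4 * norm \<xi>)"
      using norm_diff_le_heis_dist[of \<eta> \<xi>] unfolding d_def heis_dist_commute[of \<eta> \<xi>]
      by (simp add: norm_minus_commute)
    ultimately show ?thesis
      using bound by (meson order_trans)
  qed
qed

section \<open>The rescaled bubble\<close>

definition bubble_gauge :: "real \<Rightarrow> real \<Rightarrow> 'n::finite heis \<Rightarrow> real" where
  "bubble_gauge k \<epsilon> p = (case p of (x, y, t) \<Rightarrow>
     norm (k\<^sup>2 * t, \<epsilon>\<^sup>2 + k\<^sup>2 * (norm x ^ 2 + norm y ^ 2)))"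

lemma bubble_gauge_pos:
  assumes "0 < \<epsilon>"
  shows "0 < bubble_gauge k \<epsilon> p"
proof (cases p)
  case (fields x y t)
  have "0 < \<epsilon>\<^sup>2 + k\<^sup>2 * (norm x ^ 2 + norm y ^ 2)"
    using assms by (simp add: add_pos_nonneg)
  also have "\<dots> \<le> bubble_gauge k \<epsilon> p"
    using norm_snd_le[of "\<epsilon>\<^sup>2 + k\<^sup>2 * (norm x ^ 2 + norm y ^ 2)" "k\<^sup>2 * t"]
    by (simp add: fields bubble_gauge_def)
  finally show ?thesis .
qed

lemma powr_square_div_square:
  fixes V \<epsilon> a :: real
  assumes "0 < V" "0 < \<epsilon>"
  shows "((V / \<epsilon>\<^sup>2)\<^sup>2) powr (- a / 2) = V powr - a * \<epsilon> powr (2 * a)"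
proof -
  have "((V / \<epsilon>\<^sup>2)\<^sup>2) powr (- a / 2) = (V / \<epsilon> powr 2) powr - a"
    using assms by (simp add: powr_powr flip: powr_numeral)
  also have "\<dots> = V powr - a / (\<epsilon> powr 2) powr - a"
    using assms(1) by (intro powr_divide)
  also have "(\<epsilon> powr 2) powr - a = \<epsilon> powr (- 2 * a)"
    unfolding powr_powr by simp
  finally show ?thesis
    by (simp add: powr_minus_divide)
qed

lemma bubble_Ueps_eq:
  fixes p :: "'n::finite heis" and s :: real
  assumes "0 < \<epsilon>"
  defines "a \<equiv> (heis_Q p - 2 * s) / 2"
  shows "bubble_Ueps S C0 s \<epsilon> p = C0 / Lp_norm (crit_exp (0 :: 'n heis) s) (bubble_U C0 s :: 'n heis \<Rightarrow> real)
    * \<epsilon> powr a * bubble_gauge (S powr (- 1 / (2 * s))) \<epsilon> p powr - a"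
proof -
  obtain x y t where p: "p = (x, y, t)"
    by (cases p)
  define k where "k = S powr (- 1 / (2 * s))"
  define V where "V = bubble_gauge k \<epsilon> p"
  have dil: "heis_dil k (heis_dil (1 / \<epsilon>) p)
      = ((k / \<epsilon>) *\<^sub>R x, (k / \<epsilon>) *\<^sub>R y, (k / \<epsilon>)\<^sup>2 * t)"
    by (simp add: p heis_dil_def power_divide)
  have "(((k / \<epsilon>)\<^sup>2 * t)\<^sup>2 + (1 + (norm ((k / \<epsilon>) *\<^sub>R x))\<^sup>2 + (norm ((k / \<epsilon>) *\<^sub>R y))\<^sup>2)\<^sup>2)
      = (V / \<epsilon>\<^sup>2)\<^sup>2"
    using assms(1)
    by (simp add: V_def p bubble_gauge_def norm_Pair power_divide power_mult_distrib field_simps)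
  moreover have "((V / \<epsilon>\<^sup>2)\<^sup>2) powr (- a / 2) = V powr - a * \<epsilon> powr (2 * a)"
    unfolding V_def using assms(1) by (intro powr_square_div_square bubble_gauge_pos)
  moreover have "- (heis_Q q - 2 * s) / 4 = - a / 2" for q :: "'n heis"
    by (simp add: a_def heis_Q_def field_simps)
  moreover have "- (heis_Q p - 2 * s) / 2 = - a"
    by (simp add: a_def field_simps)
  ultimately have "bubble_Ueps S C0 s \<epsilon> p = \<epsilon> powr - a * (C0 * (V powr - a * \<epsilon> powr (2 * a))
      / Lp_norm (crit_exp (0 :: 'n heis) s) (bubble_U C0 s :: 'n heis \<Rightarrow> real))"
    unfolding bubble_Ueps_def bubble_ustar_def bubble_ubar_def bubble_U_def k_def[symmetric] dil
    by (simp add: crit_exp_def heis_Q_def)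
  also have "\<dots> = C0 / Lp_norm (crit_exp (0 :: 'n heis) s) (bubble_U C0 s :: 'n heis \<Rightarrow> real)
      * (\<epsilon> powr - a * \<epsilon> powr (2 * a)) * V powr - a"
    by (simp add: field_simps)
  finally show ?thesis
    by (simp add: V_def k_def flip: powr_add)
qed

lemma bubble_gauge_ge: "k\<^sup>2 * heis_norm p ^ 2 \<le> bubble_gauge k \<epsilon> p"
proof (cases p)
  case (fields x y t)
  define n where "n = norm x ^ 2 + norm y ^ 2"
  have "(k\<^sup>2 * heis_norm p ^ 2) ^ 2 = (k\<^sup>2) ^ 2 * heis_norm p ^ 4"
    by (simp add: power_mult_distrib flip: power_mult)
  also have "\<dots> = (k\<^sup>2 * t) ^ 2 + (k\<^sup>2 * n) ^ 2"
    using heis_norm_pow4[of x y t, folded n_def] by (simp add: fields power_mult_distrib algebra_simps)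
  also have "\<dots> \<le> (k\<^sup>2 * t) ^ 2 + (\<epsilon>\<^sup>2 + k\<^sup>2 * n) ^ 2"
    by (intro add_left_mono power_mono) (auto simp: n_def)
  finally show ?thesis
    by (simp add: fields bubble_gauge_def norm_Pair n_def real_le_rsqrt)
qed

lemma bubble_gauge_ge_outside:
  assumes "0 \<le> r" "r \<le> heis_norm p"
  shows "k\<^sup>2 * r\<^sup>2 \<le> bubble_gauge k \<epsilon> p"
proof -
  have "k\<^sup>2 * r\<^sup>2 \<le> k\<^sup>2 * heis_norm p ^ 2"
    using assms by (intro mult_left_mono power_mono) auto
  then show ?thesis
    using bubble_gauge_ge[of k p \<epsilon>] by linarith
qed

lemma bubble_gauge_lipschitz:
  assumes "0 \<le> R"
  shows "(k\<^sup>2 * (1 + 4 * R))-lipschitz_on (cball 0 R) (bubble_gauge k \<epsilon> :: 'n::finite heis \<Rightarrow> real)"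
proof (rule lipschitz_onI)
  fix p q :: "'n heis" assume "p \<in> cball 0 R" "q \<in> cball 0 R"
  obtain x y t x' y' t' where p: "p = (x, y, t)" and q: "q = (x', y', t')"
    by (cases p; cases q)
  have "norm (x, y, t) \<le> R" "norm (x', y', t') \<le> R"
    using \<open>p \<in> cball 0 R\<close> \<open>q \<in> cball 0 R\<close> by (simp_all add: p q)
  then have R: "norm x \<le> R" "norm y \<le> R" "norm x' \<le> R" "norm y' \<le> R"
    using norm_heis_components(1,2) order_trans by metis+
  have pq: "norm (x - x') \<le> dist p q" "norm (y - y') \<le> dist p q" "\<bar>t - t'\<bar> \<le> dist p q"
    using norm_heis_components[where x="x - x'" and y="y - y'" and t="t - t'"] by (simp_all add: p q dist_norm)
  define n n' where "n = norm x ^ 2 + norm y ^ 2" and "n' = norm x' ^ 2 + norm y' ^ 2"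
  have "\<bar>n - n'\<bar> \<le> \<bar>norm x ^ 2 - norm x' ^ 2\<bar> + \<bar>norm y ^ 2 - norm y' ^ 2\<bar>"
    by (simp add: n_def n'_def)
  also have "\<dots> \<le> 4 * R * dist p q"
    using order_trans[OF abs_norm_sq_diff_le[OF R(1,3)] mult_left_mono[OF pq(1)]]
      order_trans[OF abs_norm_sq_diff_le[OF R(2,4)] mult_left_mono[OF pq(2)]] assms
    by simp
  finally have n: "\<bar>n - n'\<bar> \<le> 4 * R * dist p q" .
  have "(k\<^sup>2 * t, \<epsilon>\<^sup>2 + k\<^sup>2 * n) - (k\<^sup>2 * t', \<epsilon>\<^sup>2 + k\<^sup>2 * n') = (k\<^sup>2 * (t - t'), k\<^sup>2 * (n - n'))"
    by (simp add: algebra_simps)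
  then have "dist (bubble_gauge k \<epsilon> p) (bubble_gauge k \<epsilon> q) \<le> norm (k\<^sup>2 * (t - t'), k\<^sup>2 * (n - n'))"
    unfolding p q bubble_gauge_def dist_real_def prod.case n_def[symmetric] n'_def[symmetric]
    by (metis norm_triangle_ineq3)
  also have "\<dots> \<le> k\<^sup>2 * \<bar>t - t'\<bar> + k\<^sup>2 * \<bar>n - n'\<bar>"
    using norm_Pair_le[of "k\<^sup>2 * (t - t')" "k\<^sup>2 * (n - n')"] by (simp add: abs_mult)
  also have "\<dots> \<le> k\<^sup>2 * dist p q + k\<^sup>2 * (4 * R * dist p q)"
    using pq(3) n by (intro add_mono mult_left_mono) auto
  finally show "dist (bubble_gauge k \<epsilon> p) (bubble_gauge k \<epsilon> q) \<le> k\<^sup>2 * (1 + 4 * R) * dist p q"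
    by (simp add: algebra_simps)
next
  show "0 \<le> k\<^sup>2 * (1 + 4 * R)"
    using assms by simp
qed

definition gauge_annulus :: "real \<Rightarrow> real \<Rightarrow> real \<Rightarrow> real \<Rightarrow> 'n::finite heis set" where
  "gauge_annulus k \<epsilon> R v = {p \<in> cball 0 R. v \<le> bubble_gauge k \<epsilon> p}"

lemma bubble_profile_lipschitz:
  assumes "0 < v" "0 \<le> a" "0 \<le> R"
  shows "(a * v powr (- a - 1) * (k\<^sup>2 * (1 + 4 * R)))-lipschitz_on
    (gauge_annulus k \<epsilon> R v) (\<lambda>p :: 'n::finite heis. bubble_gauge k \<epsilon> p powr - a)"
proof (rule lipschitz_on_compose2[where f="bubble_gauge k \<epsilon>" and g="\<lambda>v. v powr - a"])
  show "(k\<^sup>2 * (1 + 4 * R))-lipschitz_on (gauge_annulus k \<epsilon> R v) (bubble_gauge k \<epsilon>)"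
    by (rule lipschitz_on_subset[OF bubble_gauge_lipschitz[OF assms(3)]]) (auto simp: gauge_annulus_def)
  show "(a * v powr (- a - 1))-lipschitz_on (bubble_gauge k \<epsilon> ` gauge_annulus k \<epsilon> R v) (\<lambda>v. v powr - a)"
    by (rule lipschitz_on_subset[OF lipschitz_on_powr_neg[OF assms(1,2)]]) (auto simp: gauge_annulus_def)
qed

lemma gauge_annulus_near_outside:
  fixes \<xi> \<eta> :: "'n::finite heis"
  assumes "0 \<le> r" "r \<le> heis_norm \<eta>" "0 \<le> R0" "min (norm \<xi>) (norm \<eta>) \<le> R0"
    and "norm (\<xi> - \<eta>) \<le> min 1 (r\<^sup>2 / (2 * (5 + 4 * R0)))"
  shows "\<xi> \<in> gauge_annulus k \<epsilon> (R0 + 1) (k\<^sup>2 * r\<^sup>2 / 2)" "\<eta> \<in> gauge_annulus k \<epsilon> (R0 + 1) (k\<^sup>2 * r\<^sup>2 / 2)"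
proof -
  have R: "norm \<xi> \<le> R0 + 1" "norm \<eta> \<le> R0 + 1"
    using assms(4,5) norm_triangle_ineq2[of \<xi> \<eta>] norm_triangle_ineq3[of \<eta> \<xi>] norm_minus_commute[of \<eta> \<xi>]
    by linarith+
  have "(5 + 4 * R0) * norm (\<xi> - \<eta>) \<le> (5 + 4 * R0) * (r\<^sup>2 / (2 * (5 + 4 * R0)))"
    using assms(3,5) by (intro mult_left_mono) auto
  also have "\<dots> = r\<^sup>2 / 2"
    using assms(3) by (simp add: field_simps)
  finally have "k\<^sup>2 * ((5 + 4 * R0) * norm (\<xi> - \<eta>)) \<le> k\<^sup>2 * (r\<^sup>2 / 2)"
    by (rule mult_left_mono) simp
  then have "k\<^sup>2 * (1 + 4 * (R0 + 1)) * norm (\<xi> - \<eta>) \<le> k\<^sup>2 * r\<^sup>2 / 2"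
    by (simp add: algebra_simps)
  moreover have "\<bar>bubble_gauge k \<epsilon> \<eta> - bubble_gauge k \<epsilon> \<xi>\<bar> \<le> k\<^sup>2 * (1 + 4 * (R0 + 1)) * norm (\<xi> - \<eta>)"
    using lipschitz_onD[OF bubble_gauge_lipschitz R(2,1)[folded mem_cball_0]] assms(3)
    by (simp add: dist_real_def dist_norm norm_minus_commute)
  moreover have "k\<^sup>2 * r\<^sup>2 \<le> bubble_gauge k \<epsilon> \<eta>"
    using assms(1,2) by (rule bubble_gauge_ge_outside)
  ultimately show "\<xi> \<in> gauge_annulus k \<epsilon> (R0 + 1) (k\<^sup>2 * r\<^sup>2 / 2)" "\<eta> \<in> gauge_annulus k \<epsilon> (R0 + 1) (k\<^sup>2 * r\<^sup>2 / 2)"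
    using R by (simp_all add: gauge_annulus_def)
qed

section \<open>The cut-off bubble\<close>

definition cutoff_profile :: "real \<Rightarrow> real \<Rightarrow> ('n::finite heis \<Rightarrow> real) \<Rightarrow> real \<Rightarrow> 'n heis \<Rightarrow> real" where
  "cutoff_profile k a \<phi> \<epsilon> p = bubble_gauge k \<epsilon> p powr - a * \<phi> p"

lemma cutoff_profile_lipschitz_on:
  assumes "0 < v" "0 \<le> a" "0 \<le> R" "L-lipschitz_on (cball 0 R) \<phi>" "\<And>p. \<bar>\<phi> p\<bar> \<le> 1"
  shows "(v powr - a * L + a * v powr (- a - 1) * (k\<^sup>2 * (1 + 4 * R)))-lipschitz_on
    (gauge_annulus k \<epsilon> R v) (cutoff_profile k a \<phi> \<epsilon>)"
proof -
  have "(v powr - a * L + 1 * (a * v powr (- a - 1) * (k\<^sup>2 * (1 + 4 * R))))-lipschitz_on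
      (gauge_annulus k \<epsilon> R v) (\<lambda>p. bubble_gauge k \<epsilon> p powr - a * \<phi> p)"
  proof (rule lipschitz_on_mult_bounded)
    show "(a * v powr (- a - 1) * (k\<^sup>2 * (1 + 4 * R)))-lipschitz_on (gauge_annulus k \<epsilon> R v)
        (\<lambda>p. bubble_gauge k \<epsilon> p powr - a)"
      by (rule bubble_profile_lipschitz[OF assms(1-3)])
    show "L-lipschitz_on (gauge_annulus k \<epsilon> R v) \<phi>"
      by (rule lipschitz_on_subset[OF assms(4)]) (auto simp: gauge_annulus_def)
    show "\<bar>bubble_gauge k \<epsilon> p powr - a\<bar> \<le> v powr - a" if "p \<in> gauge_annulus k \<epsilon> R v" for p
      using that assms(1,2) by (auto simp: gauge_annulus_def intro: powr_mono2')
  qed (use assms(5) in auto)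
  then show ?thesis
    by (simp add: cutoff_profile_def[abs_def])
qed

lemma cutoff_profile_bounded:
  assumes "k \<noteq> 0" "0 \<le> a" "0 < r" "r \<le> heis_norm p" "\<bar>\<phi> p\<bar> \<le> 1"
  shows "\<bar>cutoff_profile k a \<phi> \<epsilon> p\<bar> \<le> (k\<^sup>2 * r\<^sup>2) powr - a"
proof -
  have "bubble_gauge k \<epsilon> p powr - a \<le> (k\<^sup>2 * r\<^sup>2) powr - a"
    using bubble_gauge_ge_outside[of r p k \<epsilon>] assms(1-4) by (intro powr_mono2') auto
  then show ?thesis
    using mult_left_le[OF assms(5) powr_ge_zero, of "bubble_gauge k \<epsilon> p" "- a"]
    by (simp add: cutoff_profile_def abs_mult)
qed

lemma cutoff_profile_lipschitz_near_support:
  fixes \<phi> :: "'n::finite heis \<Rightarrow> real" and \<xi> \<eta> :: "'n heis"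
  defines "d \<equiv> heis_norm (heis_mult (heis_inv \<eta>) \<xi>)"
  assumes lip: "L-lipschitz_on (gauge_annulus k \<epsilon> (R0 + 1) (k\<^sup>2 * r\<^sup>2 / 2)) (cutoff_profile k a \<phi> \<epsilon>)"
    and "0 < r" "0 \<le> R0" "\<And>p. \<phi> p \<noteq> 0 \<Longrightarrow> norm p \<le> R0"
    and "r \<le> heis_norm \<eta>" "d \<le> min 1 (r\<^sup>2 / (2 * (5 + 4 * R0))) / (3 + 4 * R0)"
  shows "\<bar>cutoff_profile k a \<phi> \<epsilon> \<xi> - cutoff_profile k a \<phi> \<epsilon> \<eta>\<bar> \<le> L * (3 + 4 * R0) * d"
proof (cases "\<phi> \<xi> = 0 \<and> \<phi> \<eta> = 0")
  case True
  then show ?thesis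
    using lipschitz_on_nonneg[OF lip] assms(4) heis_norm_nonneg[of "heis_mult (heis_inv \<eta>) \<xi>"]
    by (simp add: cutoff_profile_def d_def)
next
  case False
  then have near_supp: "min (norm \<xi>) (norm \<eta>) \<le> R0"
    using assms(5) by (meson min.coboundedI1 min.coboundedI2)
  have "min 1 (r\<^sup>2 / (2 * (5 + 4 * R0))) / (3 + 4 * R0) \<le> 1"
    using assms(4) by (simp add: min_le_iff_disj divide_le_eq)
  then have eucl: "norm (\<xi> - \<eta>) \<le> (3 + 4 * R0) * d"
    using near_supp assms(7) unfolding d_def by (intro norm_diff_le_heis_dist_near) auto
  also have "\<dots> \<le> min 1 (r\<^sup>2 / (2 * (5 + 4 * R0)))"
    using assms(4,7) by (simp add: field_simps)
  finally have "\<xi> \<in> gauge_annulus k \<epsilon> (R0 + 1) (k\<^sup>2 * r\<^sup>2 / 2)"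
      "\<eta> \<in> gauge_annulus k \<epsilon> (R0 + 1) (k\<^sup>2 * r\<^sup>2 / 2)"
    using gauge_annulus_near_outside[OF _ assms(6,4) near_supp] assms(3) by auto
  then have "\<bar>cutoff_profile k a \<phi> \<epsilon> \<xi> - cutoff_profile k a \<phi> \<epsilon> \<eta>\<bar> \<le> L * norm (\<xi> - \<eta>)"
    using lipschitz_onD[OF lip] by (simp add: dist_real_def dist_norm)
  also have "\<dots> \<le> L * (3 + 4 * R0) * d"
    using mult_left_mono[OF eucl lipschitz_on_nonneg[OF lip]] by (simp add: mult_ac)
  finally show ?thesis .
qed

lemma cutoff_profile_local_lipschitz:
  fixes \<phi> :: "'n::finite heis \<Rightarrow> real"
  assumes "k \<noteq> 0" "0 \<le> a" "0 < r" "Ck 1 \<phi>"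
    and "\<And>p. \<bar>\<phi> p\<bar> \<le> 1" "\<And>p. 2 * r \<le> heis_norm p \<Longrightarrow> \<phi> p = 0"
  obtains \<rho> M where "0 < \<rho>" "\<rho> \<le> 1" "0 \<le> M"
    and "\<And>\<epsilon> \<xi> \<eta>. r \<le> heis_norm \<eta> \<Longrightarrow> heis_norm (heis_mult (heis_inv \<eta>) \<xi>) \<le> \<rho> \<Longrightarrow>
      \<bar>cutoff_profile k a \<phi> \<epsilon> \<xi> - cutoff_profile k a \<phi> \<epsilon> \<eta>\<bar> \<le> M * heis_norm (heis_mult (heis_inv \<eta>) \<xi>)"
proof -
  define R0 where "R0 = 2 * r + (2 * r)\<^sup>2"
  define v where "v = k\<^sup>2 * r\<^sup>2 / 2"
  have R0: "0 \<le> R0"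
    using assms(3) by (simp add: R0_def)
  have v: "0 < v"
    using assms(1,3) by (simp add: v_def)
  have supp: "norm p \<le> R0" if "\<phi> p \<noteq> 0" for p :: "'n heis"
    using assms(6)[of p] that norm_le_of_heis_norm_le[of p "2 * r"] unfolding R0_def by linarith
  obtain L\<phi> where "L\<phi>-lipschitz_on (cball 0 (R0 + 1)) \<phi>"
    using Ck_1_lipschitz_on[OF assms(4) compact_cball convex_cball] .
  define L where "L = v powr - a * L\<phi> + a * v powr (- a - 1) * (k\<^sup>2 * (1 + 4 * (R0 + 1)))"
  have lip: "L-lipschitz_on (gauge_annulus k \<epsilon> (R0 + 1) v) (cutoff_profile k a \<phi> \<epsilon>)" for \<epsilon>
    unfolding L_def using R0 \<open>L\<phi>-lipschitz_on (cball 0 (R0 + 1)) \<phi>\<close>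
    by (intro cutoff_profile_lipschitz_on v assms(2,5)) auto
  show thesis
  proof (rule that)
    show "0 < min 1 (r\<^sup>2 / (2 * (5 + 4 * R0))) / (3 + 4 * R0)"
      "min 1 (r\<^sup>2 / (2 * (5 + 4 * R0))) / (3 + 4 * R0) \<le> 1"
      using assms(3) R0 by (auto simp: min_le_iff_disj divide_le_eq)
    show "0 \<le> L * (3 + 4 * R0)"
      using lipschitz_on_nonneg[OF lip] R0 by simp
  qed (use cutoff_profile_lipschitz_near_support[OF lip[unfolded v_def] assms(3) R0 supp] in auto)
qed

lemma cutoff_profile_estimates:
  fixes \<phi> :: "'n::finite heis \<Rightarrow> real"
  assumes "k \<noteq> 0" "0 \<le> a" "0 < r" "Ck 1 \<phi>"
    and "\<And>p. \<bar>\<phi> p\<bar> \<le> 1" "\<And>p. 2 * r \<le> heis_norm p \<Longrightarrow> \<phi> p = 0"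
  shows "\<exists>\<rho> > 0. \<exists>C > 0. \<forall>\<epsilon> > 0.
    (\<forall>\<xi> \<eta>. r \<le> heis_norm \<eta> \<and> heis_norm (heis_mult (heis_inv \<eta>) \<xi>) \<le> \<rho> \<longrightarrow>
        \<bar>K * \<epsilon> powr a * cutoff_profile k a \<phi> \<epsilon> \<xi> - K * \<epsilon> powr a * cutoff_profile k a \<phi> \<epsilon> \<eta>\<bar>
          \<le> C * \<epsilon> powr a * heis_norm (heis_mult (heis_inv \<eta>) \<xi>)) \<and>
    (\<forall>\<xi> \<eta>. r \<le> heis_norm \<xi> \<and> r \<le> heis_norm \<eta> \<longrightarrow>
        \<bar>K * \<epsilon> powr a * cutoff_profile k a \<phi> \<epsilon> \<xi> - K * \<epsilon> powr a * cutoff_profile k a \<phi> \<epsilon> \<eta>\<bar>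
          \<le> C * \<epsilon> powr a * min 1 (heis_norm (heis_mult (heis_inv \<eta>) \<xi>)))"
proof -
  obtain \<rho> M where \<rho>: "0 < \<rho>" "\<rho> \<le> 1" and "0 \<le> M" and local:
    "\<And>\<epsilon> \<xi> \<eta>. r \<le> heis_norm \<eta> \<Longrightarrow> heis_norm (heis_mult (heis_inv \<eta>) \<xi>) \<le> \<rho> \<Longrightarrow>
      \<bar>cutoff_profile k a \<phi> \<epsilon> \<xi> - cutoff_profile k a \<phi> \<epsilon> \<eta>\<bar> \<le> M * heis_norm (heis_mult (heis_inv \<eta>) \<xi>)"
    using cutoff_profile_local_lipschitz[OF assms] by blast
  define X where "X = max M (2 * (k\<^sup>2 * r\<^sup>2) powr - a / \<rho>)"
  have "0 < \<bar>K\<bar> * X + 1"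
    using \<open>0 \<le> M\<close> by (simp add: X_def add_nonneg_pos)
  moreover have "\<bar>cutoff_profile k a \<phi> \<epsilon> \<xi> - cutoff_profile k a \<phi> \<epsilon> \<eta>\<bar> \<le> X * heis_norm (heis_mult (heis_inv \<eta>) \<xi>)"
    if "r \<le> heis_norm \<eta>" "heis_norm (heis_mult (heis_inv \<eta>) \<xi>) \<le> \<rho>" for \<epsilon> \<xi> \<eta>
    using local[OF that] mult_right_mono[OF max.cobounded1 heis_norm_nonneg]
    unfolding X_def by (rule order_trans)
  moreover have "\<bar>cutoff_profile k a \<phi> \<epsilon> \<xi> - cutoff_profile k a \<phi> \<epsilon> \<eta>\<bar>
      \<le> X * min 1 (heis_norm (heis_mult (heis_inv \<eta>) \<xi>))"
    if "r \<le> heis_norm \<xi>" "r \<le> heis_norm \<eta>" for \<epsilon> \<xi> \<eta>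
    unfolding X_def using \<rho> \<open>0 \<le> M\<close> heis_norm_nonneg local[OF that(2)]
      cutoff_profile_bounded[OF assms(1-3) that(1) assms(5)]
      cutoff_profile_bounded[OF assms(1-3) that(2) assms(5)]
    by (rule abs_diff_le_min_one)
  ultimately show ?thesis
    using \<rho>(1)
    by (intro exI[of _ \<rho>] conjI exI[of _ "\<bar>K\<bar> * X + 1"] allI impI abs_scaled_diff_le)
      (auto simp: heis_norm_nonneg)
qed

theorem lemma3p10:
  fixes \<Omega> :: "'n::finite heis set"
    and \<phi> :: "'n heis \<Rightarrow> real"
    and r s S C0 :: real
  assumes "0 < s" "s < 1"
    and "S > 0"
    and "C0 > 0"
    and "open \<Omega>" "bounded \<Omega>"
    and "r > 0" "heis_ball (4 * r) \<subseteq> \<Omega>"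
    and "smooth_fun \<phi>"
    and "\<And>p. 0 \<le> \<phi> p \<and> \<phi> p \<le> 1"
    and "\<And>p. p \<in> heis_ball r \<Longrightarrow> \<phi> p = 1"
    and "\<And>p. p \<notin> heis_ball (2 * r) \<Longrightarrow> \<phi> p = 0"
  shows "\<exists>rb > 0. \<exists>C > 0. \<forall>\<epsilon> > 0.
    (\<forall>\<xi> \<eta>. \<eta> \<notin> heis_ball r \<and> heis_norm (heis_mult (heis_inv \<eta>) \<xi>) \<le> rb \<longrightarrow>
        \<bar>bubble_Ueps S C0 s \<epsilon> \<xi> * \<phi> \<xi> - bubble_Ueps S C0 s \<epsilon> \<eta> * \<phi> \<eta>\<bar>
          \<le> C * \<epsilon> powr ((heis_Q \<xi> - 2 * s) / 2) * heis_norm (heis_mult (heis_inv \<eta>) \<xi>)) \<and>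
    (\<forall>\<xi> \<eta>. \<xi> \<notin> heis_ball r \<and> \<eta> \<notin> heis_ball r \<longrightarrow>
        \<bar>bubble_Ueps S C0 s \<epsilon> \<xi> * \<phi> \<xi> - bubble_Ueps S C0 s \<epsilon> \<eta> * \<phi> \<eta>\<bar>
          \<le> C * \<epsilon> powr ((heis_Q \<xi> - 2 * s) / 2) * min 1 (heis_norm (heis_mult (heis_inv \<eta>) \<xi>)))"
proof -
  define a where "a = (heis_Q (0 :: 'n heis) - 2 * s) / 2"
  define k where "k = S powr (- 1 / (2 * s))"
  define K where "K = C0 / Lp_norm (crit_exp (0 :: 'n heis) s) (bubble_U C0 s :: 'n heis \<Rightarrow> real)"
  have a: "0 \<le> a" "\<And>p :: 'n heis. (heis_Q p - 2 * s) / 2 = a"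
    using assms(2) by (simp_all add: a_def heis_Q_def)
  have U: "bubble_Ueps S C0 s \<epsilon> p * \<phi> p = K * \<epsilon> powr a * cutoff_profile k a \<phi> \<epsilon> p" if "0 < \<epsilon>" for \<epsilon> p
  proof -
    have "bubble_Ueps S C0 s \<epsilon> p = K * \<epsilon> powr a * bubble_gauge k \<epsilon> p powr - a"
      unfolding K_def k_def a(2)[symmetric, of p] by (rule bubble_Ueps_eq[OF that])
    then show ?thesis
      by (simp add: cutoff_profile_def)
  qed
  have "k \<noteq> 0"
    using assms(3) by (simp add: k_def)
  have \<phi>: "Ck 1 \<phi>" "\<And>p. \<bar>\<phi> p\<bar> \<le> 1" "\<And>p. 2 * r \<le> heis_norm p \<Longrightarrow> \<phi> p = 0"
    using assms(9-12) by (auto simp: smooth_fun_def heis_ball_def not_less)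
  from cutoff_profile_estimates[OF \<open>k \<noteq> 0\<close> a(1) assms(7) \<phi>, of K]
  show ?thesis
    unfolding heis_ball_def mem_Collect_eq not_less a(2) by (simp add: U)
qed

end
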